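(* Let $\mathbf{f}_1,\mathbf{f}_2,\mathbf{g}$ be power sums such that the multiplicative group generated by all their roots is torsion-free and $\mathbf{f}_1$ is reduced. Suppose that $\mathbf{f}_2=\mathbf{f}_1\cdot\mathbf{g}$ (as functions of $n$). Then every root of $\mathbf{f}_1$ has finite index in the group generated by the roots of $\mathbf{f}_2$, i.e. for every root $\gamma$ of $\mathbf{f}_1$ some positive integer power of $\gamma$ lies in the multiplicative group generated by the roots of $\mathbf{f}_2$.
   Context: A power sum is a function $n\mapsto\mathbf{f}(n)=\sum_{i=1}^k b_i\alpha_i^n$ with $k\ge1$, nonzero complex coefficients $b_i$ and pairwise distinct nonzero complex numbers $\alpha_i$; this representation is unique and the $\alpha_i$ are the roots of $\mathbf{f}$. A power sum is reduced if one of its roots equals $1$. *)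

theory Defs
  imports Complex_Main
begin

text \<open>By uniqueness of the representation, S is the set of roots of f.\<close>
definition power_sum_repr :: "(nat \<Rightarrow> complex) \<Rightarrow> complex set \<Rightarrow> (complex \<Rightarrow> complex) \<Rightarrow> bool" where
  "power_sum_repr f S c \<longleftrightarrow> finite S \<and> S \<noteq> {} \<and> 0 \<notin> S \<and> (\<forall>\<alpha>\<in>S. c \<alpha> \<noteq> 0)
     \<and> (\<forall>n. f n = (\<Sum>\<alpha>\<in>S. c \<alpha> * \<alpha> ^ n))"

inductive_set gen_group :: "complex set \<Rightarrow> complex set" for A where
  one: "1 \<in> gen_group A"
| gen: "a \<in> A \<Longrightarrow> a \<in> gen_group A"
| mult: "x \<in> gen_group A \<Longrightarrow> y \<in> gen_group A \<Longrightarrow> x * y \<in> gen_group A"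
| inv: "x \<in> gen_group A \<Longrightarrow> inverse x \<in> gen_group A"

definition torsion_free :: "complex set \<Rightarrow> bool" where
  "torsion_free G \<longleftrightarrow> (\<forall>x\<in>G. \<forall>k::nat. k > 0 \<longrightarrow> x ^ k = 1 \<longrightarrow> x = 1)"

end

theory Submission
  imports Defs
begin

text \<open>Suppose no positive power of the root \<open>\<gamma>\<close> of \<open>f\<^sub>1\<close> lies in the group generated by the
  roots of \<open>f\<^sub>2\<close>. Since \<open>\<real>\<close> is divisible, additive real characters of the finitely generated
  group \<open>G\<close> generated by all roots extend one generator at a time, so there is a character \<open>\<phi>\<close>
  vanishing on the roots of \<open>f\<^sub>2\<close> with \<open>\<phi> \<gamma> = 1\<close>; torsion-freeness yields further characters
  separating any two distinct elements of \<open>G\<close>. Ordering the roots lexicographically by \<open>\<phi>\<close>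
  followed by these separating characters, the maximal root \<open>a\<close> of \<open>f\<^sub>1\<close> and the maximal root
  \<open>b\<close> of \<open>g\<close> form the only pair of roots with product \<open>a b\<close>, so by linear independence of
  exponentials \<open>a b\<close> is a root of \<open>f\<^sub>2\<close> and \<open>\<phi> a + \<phi> b = 0\<close>; the same holds for the minimal
  roots. But \<open>\<phi> a \<ge> \<phi> \<gamma> = 1\<close> and, as \<open>1\<close> is a root of \<open>f\<^sub>1\<close>, the minimal value is \<open>\<le> 0\<close>,
  which contradicts the two vanishing sums.\<close>

lemma gen_group_nonzero:
  assumes "0 \<notin> C" "x \<in> gen_group C"
  shows "x \<noteq> 0"
  using assms(2) by (induction rule: gen_group.induct) (use assms(1) in auto)

lemma gen_group_power: "x \<in> gen_group C \<Longrightarrow> x ^ k \<in> gen_group C"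
  by (induction k) (auto intro: gen_group.intros)

lemma gen_group_mono:
  assumes "C \<subseteq> D" "x \<in> gen_group C"
  shows "x \<in> gen_group D"
  using assms(2) by (induction rule: gen_group.induct) (use assms(1) in \<open>auto intro: gen_group.intros\<close>)

lemma gen_group_empty: "x \<in> gen_group {} \<Longrightarrow> x = 1"
  by (induction rule: gen_group.induct) auto

lemma gen_group_insert_cases:
  assumes "a \<noteq> 0" "y \<in> gen_group (insert a C)"
  shows "\<exists>m\<in>gen_group C. \<exists>j::int. y = m * a powi j"
  using assms(2)
proof (induction rule: gen_group.induct)
  case one
  then show ?case by (intro bexI[of _ 1] exI[of _ 0]) (auto intro: gen_group.intros)
next
  case (gen b)
  then show ?case
  proof
    assume "b = a"
    then show ?thesis by (intro bexI[of _ 1] exI[of _ 1]) (auto intro: gen_group.intros)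
  next
    assume "b \<in> C"
    then show ?thesis by (intro bexI[of _ b] exI[of _ 0]) (auto intro: gen_group.intros)
  qed
next
  case (mult x y)
  then obtain m j m' j' where "m \<in> gen_group C" "m' \<in> gen_group C"
    "x = m * a powi j" "y = m' * a powi j'"
    by blast
  then show ?case using assms(1)
    by (intro bexI[of _ "m * m'"] exI[of _ "j + j'"]) (auto simp: power_int_add intro: gen_group.intros)
next
  case (inv x)
  then obtain m j where "m \<in> gen_group C" "x = m * a powi j" by blast
  then show ?case using assms(1)
    by (intro bexI[of _ "inverse m"] exI[of _ "-j"]) (auto simp: power_int_minus intro: gen_group.intros)
qed

lemma power_int_mem_gen_group_imp_zero:
  assumes "\<forall>k>0. a ^ k \<notin> gen_group C" and "a powi d \<in> gen_group C"
  shows "d = 0"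
proof (rule ccontr)
  assume "d \<noteq> 0"
  then consider "d > 0" | "d < 0" by linarith
  then have "a ^ nat \<bar>d\<bar> \<in> gen_group C"
  proof cases
    case 1
    then show ?thesis using assms(2) by (simp add: power_int_def)
  next
    case 2
    then have "a ^ nat \<bar>d\<bar> = inverse (a powi d)" by (simp add: power_int_def power_inverse)
    then show ?thesis using assms(2) by (simp add: gen_group.inv)
  qed
  then show False using assms(1) \<open>d \<noteq> 0\<close> by auto
qed

definition hom_on :: "complex set \<Rightarrow> (complex \<Rightarrow> real) \<Rightarrow> bool" where
  "hom_on G h \<longleftrightarrow> (\<forall>x\<in>G. \<forall>y\<in>G. h (x * y) = h x + h y)"

lemma hom_on_subset: "hom_on G h \<Longrightarrow> H \<subseteq> G \<Longrightarrow> hom_on H h"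
  unfolding hom_on_def by blast

lemma hom_on_uminus: "hom_on G h \<Longrightarrow> hom_on G (\<lambda>x. - h x)"
  unfolding hom_on_def by auto

lemma hom_on_one: "hom_on (gen_group C) h \<Longrightarrow> h 1 = 0"
  using gen_group.one[of C] unfolding hom_on_def by (metis add_cancel_right_right mult_1)

lemma hom_on_inverse:
  assumes "0 \<notin> C" "hom_on (gen_group C) h" "x \<in> gen_group C"
  shows "h (inverse x) = - h x"
proof -
  have "h (x * inverse x) = h x + h (inverse x)"
    using assms(2,3) gen_group.inv unfolding hom_on_def by blast
  then show ?thesis using gen_group_nonzero[OF assms(1,3)] hom_on_one[OF assms(2)] by simp
qed

lemma hom_on_power: "hom_on (gen_group C) h \<Longrightarrow> x \<in> gen_group C \<Longrightarrow> h (x ^ k) = real k * h x"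
proof (induction k)
  case 0
  then show ?case using hom_on_one by simp
next
  case (Suc k)
  have "h (x * x ^ k) = h x + h (x ^ k)" using Suc.prems gen_group_power unfolding hom_on_def by blast
  then show ?case using Suc by (simp add: algebra_simps)
qed

lemma hom_on_power_int:
  assumes "0 \<notin> C" "hom_on (gen_group C) h" "x \<in> gen_group C"
  shows "h (x powi d) = of_int d * h x"
proof (cases "d \<ge> 0")
  case True
  then show ?thesis using hom_on_power[OF assms(2,3), of "nat d"] by (simp add: power_int_def)
next
  case False
  have "x powi d = inverse (x ^ nat (-d))" using False by (simp add: power_int_def power_inverse)
  then show ?thesis
    using False hom_on_inverse[OF assms(1,2) gen_group_power[OF assms(3)]] hom_on_power[OF assms(2,3)]
    by simp
qed

lemma compatible_value_well_defined:
  assumes C: "0 \<notin> C" and a: "a \<noteq> 0" and \<phi>: "hom_on (gen_group C) \<phi>"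
    and v: "\<forall>d::int. a powi d \<in> gen_group C \<longrightarrow> \<phi> (a powi d) = of_int d * v"
    and m: "m \<in> gen_group C" "m' \<in> gen_group C" "m * a powi j = m' * a powi j'"
  shows "\<phi> m + of_int j * v = \<phi> m' + of_int j' * v"
proof -
  have "m \<noteq> 0" using m(1) gen_group_nonzero C by blast
  then have m': "m' = m * a powi (j - j')" and "a powi (j - j') = m' * inverse m"
    using m(3) a by (simp_all add: power_int_diff field_simps)
  then have "a powi (j - j') \<in> gen_group C" using m(1,2) by (auto intro: gen_group.intros)
  then show ?thesis using \<phi> v m(1) m' unfolding hom_on_def by (simp add: algebra_simps)
qed

lemma hom_on_extend_insert_value:
  assumes C: "0 \<notin> C" and a: "a \<noteq> 0" and \<phi>: "hom_on (gen_group C) \<phi>"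
    and v: "\<forall>d::int. a powi d \<in> gen_group C \<longrightarrow> \<phi> (a powi d) = of_int d * v"
  shows "\<exists>\<phi>'. hom_on (gen_group (insert a C)) \<phi>' \<and> (\<forall>y\<in>gen_group C. \<phi>' y = \<phi> y) \<and> \<phi>' a = v"
proof -
  let ?M = "gen_group C"
  define \<phi>' where "\<phi>' y = (SOME r. \<exists>m\<in>?M. \<exists>j::int. y = m * a powi j \<and> r = \<phi> m + of_int j * v)" for y
  have \<phi>'_eq: "\<phi>' (m * a powi j) = \<phi> m + of_int j * v" if "m \<in> ?M" for m j
  proof -
    have "\<exists>r. \<exists>m'\<in>?M. \<exists>j'::int. m * a powi j = m' * a powi j' \<and> r = \<phi> m' + of_int j' * v"
      using that by blast
    from someI_ex[OF this] obtain m' j' where "m' \<in> ?M" "m * a powi j = m' * a powi j'"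
      "\<phi>' (m * a powi j) = \<phi> m' + of_int j' * v"
      unfolding \<phi>'_def by blast
    then show ?thesis using compatible_value_well_defined[OF C a \<phi> v that] by metis
  qed
  have "hom_on (gen_group (insert a C)) \<phi>'"
    unfolding hom_on_def
  proof (intro ballI)
    fix x y assume "x \<in> gen_group (insert a C)" "y \<in> gen_group (insert a C)"
    then obtain m j m' j' where mm: "m \<in> ?M" "m' \<in> ?M" "x = m * a powi j" "y = m' * a powi j'"
      using gen_group_insert_cases[OF a] by metis
    have "x * y = (m * m') * a powi (j + j')" using mm a by (simp add: power_int_add)
    moreover have "m * m' \<in> ?M" using mm by (auto intro: gen_group.intros)
    ultimately have "\<phi>' (x * y) = \<phi> (m * m') + of_int (j + j') * v" using \<phi>'_eq by simp
    also have "\<dots> = \<phi>' x + \<phi>' y" using \<phi>'_eq mm \<phi> unfolding hom_on_def by (simp add: algebra_simps)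
    finally show "\<phi>' (x * y) = \<phi>' x + \<phi>' y" .
  qed
  moreover have "\<forall>y\<in>?M. \<phi>' y = \<phi> y" using \<phi>'_eq[of _ 0] by simp
  moreover have "\<phi>' a = v" using \<phi>'_eq[of 1 1] hom_on_one[OF \<phi>] by (simp add: gen_group.one)
  ultimately show ?thesis by blast
qed

text \<open>The compatible value is \<open>\<phi> (a ^ k) / k\<close> for any \<open>k > 0\<close> with \<open>a ^ k \<in> gen_group C\<close>; this is
  where divisibility of \<open>\<real>\<close> enters.\<close>

lemma hom_on_compatible_value:
  assumes C: "0 \<notin> C" and \<phi>: "hom_on (gen_group C) \<phi>"
  shows "\<exists>v. \<forall>d::int. a powi d \<in> gen_group C \<longrightarrow> \<phi> (a powi d) = of_int d * v"
proof (cases "\<exists>k>0. a ^ k \<in> gen_group C")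
  case True
  then obtain k where k: "k > 0" "a ^ k \<in> gen_group C" by blast
  show ?thesis
  proof (intro exI[of _ "\<phi> (a ^ k) / real k"] allI impI)
    fix d :: int assume d: "a powi d \<in> gen_group C"
    have "(a powi d) ^ k = (a ^ k) powi d" by (simp add: power_int_power power_int_power' mult.commute)
    then have "real k * \<phi> (a powi d) = of_int d * \<phi> (a ^ k)"
      using hom_on_power[OF \<phi> d, of k] hom_on_power_int[OF C \<phi> k(2), of d] by simp
    then show "\<phi> (a powi d) = of_int d * (\<phi> (a ^ k) / real k)" using k(1) by (simp add: field_simps)
  qed
next
  case False
  then have "\<forall>d. a powi d \<in> gen_group C \<longrightarrow> d = 0"
    using power_int_mem_gen_group_imp_zero by blast
  then show ?thesis using hom_on_one[OF \<phi>] by (intro exI[of _ 0] allI impI) auto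
qed

lemma hom_on_extend_finite:
  assumes "finite F" "0 \<notin> F \<union> C" "hom_on (gen_group C) \<phi>"
  shows "\<exists>\<phi>'. hom_on (gen_group (F \<union> C)) \<phi>' \<and> (\<forall>y\<in>gen_group C. \<phi>' y = \<phi> y)"
  using assms
proof (induction F rule: finite_induct)
  case empty
  then show ?case by auto
next
  case (insert a F)
  then obtain \<psi> where \<psi>: "hom_on (gen_group (F \<union> C)) \<psi>" "\<forall>y\<in>gen_group C. \<psi> y = \<phi> y"
    by auto
  have FC: "0 \<notin> F \<union> C" and a: "a \<noteq> 0" using insert.prems(1) by auto
  obtain v where "\<forall>d::int. a powi d \<in> gen_group (F \<union> C) \<longrightarrow> \<psi> (a powi d) = of_int d * v"
    using hom_on_compatible_value[OF FC \<psi>(1)] by blast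
  from hom_on_extend_insert_value[OF FC a \<psi>(1) this] obtain \<psi>' where
    \<psi>': "hom_on (gen_group (insert a (F \<union> C))) \<psi>'" "\<forall>y\<in>gen_group (F \<union> C). \<psi>' y = \<psi> y"
    by blast
  have "\<forall>y\<in>gen_group C. \<psi>' y = \<phi> y" using \<psi>'(2) \<psi>(2) gen_group_mono[of C "F \<union> C"] by auto
  then show ?case using \<psi>'(1) by auto
qed

lemma exists_hom_on_vanishing:
  assumes A: "finite A" "0 \<notin> A" and B: "B \<subseteq> gen_group A" and x: "x \<in> gen_group A"
    and no_power: "\<forall>k>0. x ^ k \<notin> gen_group B"
  shows "\<exists>h. hom_on (gen_group A) h \<and> (\<forall>b\<in>B. h b = 0) \<and> h x = 1"
proof -
  have B0: "0 \<notin> B" and x0: "x \<noteq> 0" using B x gen_group_nonzero[OF A(2)] by auto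
  have "\<forall>d::int. x powi d \<in> gen_group B \<longrightarrow> (\<lambda>_. 0::real) (x powi d) = of_int d * 1"
    using power_int_mem_gen_group_imp_zero[OF no_power] by simp
  from hom_on_extend_insert_value[OF B0 x0 _ this] obtain h0 where
    h0: "hom_on (gen_group (insert x B)) h0" "\<forall>y\<in>gen_group B. h0 y = 0" "h0 x = 1"
    unfolding hom_on_def by auto
  obtain h where h: "hom_on (gen_group (A \<union> insert x B)) h" "\<forall>y\<in>gen_group (insert x B). h y = h0 y"
    using hom_on_extend_finite[OF A(1) _ h0(1)] A(2) B0 x0 by auto
  have "hom_on (gen_group A) h"
    using hom_on_subset[OF h(1)] gen_group_mono[of A "A \<union> insert x B"] by blast
  moreover have "\<forall>b\<in>B. h b = 0" and "h x = 1"
    using h(2) h0(2,3) gen_group.gen[of _ B] gen_group.gen[of _ "insert x B"] by auto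
  ultimately show ?thesis by blast
qed

definition separates_points :: "(complex \<Rightarrow> real) list \<Rightarrow> complex set \<Rightarrow> bool" where
  "separates_points hs X \<longleftrightarrow> (\<forall>x\<in>X. \<forall>y\<in>X. x \<noteq> y \<longrightarrow> (\<exists>h\<in>set hs. h x \<noteq> h y))"

lemma separates_points_subset: "separates_points hs X \<Longrightarrow> Y \<subseteq> X \<Longrightarrow> separates_points hs Y"
  unfolding separates_points_def by blast

lemma torsion_free_hom_on_separates:
  assumes A: "finite A" "0 \<notin> A" and tf: "torsion_free (gen_group A)"
    and xy: "x \<in> gen_group A" "y \<in> gen_group A" "x \<noteq> y"
  shows "\<exists>h. hom_on (gen_group A) h \<and> h x \<noteq> h y"
proof -
  have y0: "y \<noteq> 0" using xy(2) gen_group_nonzero[OF A(2)] by blast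
  define q where "q = x * inverse y"
  have q: "q \<in> gen_group A" using xy(1,2) unfolding q_def by (auto intro: gen_group.intros)
  have "q \<noteq> 1" using xy(3) y0 unfolding q_def by (auto simp: field_simps)
  then have "\<forall>k>0. q ^ k \<notin> gen_group {}"
    using tf q gen_group_empty unfolding torsion_free_def by blast
  from exists_hom_on_vanishing[OF A _ q this] obtain h where h: "hom_on (gen_group A) h" "h q = 1"
    by auto
  have "x = q * y" unfolding q_def using y0 by simp
  then have "h x = h q + h y" using h(1) q xy(2) unfolding hom_on_def by metis
  then show ?thesis using h by auto
qed

lemma torsion_free_separating_homs:
  assumes A: "finite A" "0 \<notin> A" "torsion_free (gen_group A)"
    and X: "finite X" "X \<subseteq> gen_group A"
  shows "\<exists>hs. (\<forall>h\<in>set hs. hom_on (gen_group A) h) \<and> separates_points hs X"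
proof -
  define P where "P = {p \<in> X \<times> X. fst p \<noteq> snd p}"
  have "finite P" using X(1) unfolding P_def by simp
  have "\<forall>p\<in>P. \<exists>h. hom_on (gen_group A) h \<and> h (fst p) \<noteq> h (snd p)"
    using torsion_free_hom_on_separates[OF A] X(2) unfolding P_def by auto
  then obtain \<psi> where \<psi>: "\<forall>p\<in>P. hom_on (gen_group A) (\<psi> p) \<and> \<psi> p (fst p) \<noteq> \<psi> p (snd p)"
    by metis
  obtain ps where "set ps = P" using finite_list[OF \<open>finite P\<close>] by blast
  then have "(\<forall>h\<in>set (map \<psi> ps). hom_on (gen_group A) h) \<and> separates_points (map \<psi> ps) X"
    using \<psi> unfolding separates_points_def P_def by force
  then show ?thesis by blast
qed

lemma power_sum_zero_imp_coeffs_zero: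
  fixes u :: "complex \<Rightarrow> complex"
  assumes "finite Z" "\<forall>n. (\<Sum>z\<in>Z. u z * z ^ n) = 0"
  shows "\<forall>z\<in>Z. u z = 0"
  using assms
proof (induction Z arbitrary: u rule: finite_induct)
  case empty
  then show ?case by simp
next
  case (insert z0 Z)
  have "\<forall>n. (\<Sum>z\<in>Z. (u z * (z - z0)) * z ^ n) = 0"
  proof
    fix n
    have "(\<Sum>z\<in>Z. (u z * (z - z0)) * z ^ n) = (\<Sum>z\<in>insert z0 Z. (u z * (z - z0)) * z ^ n)"
      using insert(1,2) by simp
    also have "\<dots> = (\<Sum>z\<in>insert z0 Z. u z * z ^ Suc n - z0 * (u z * z ^ n))"
      by (rule sum.cong) (auto simp: algebra_simps)
    also have "\<dots> = (\<Sum>z\<in>insert z0 Z. u z * z ^ Suc n) - z0 * (\<Sum>z\<in>insert z0 Z. u z * z ^ n)"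
      by (simp only: sum_subtractf sum_distrib_left)
    also have "\<dots> = 0" using insert(4)[rule_format, of "Suc n"] insert(4)[rule_format, of n] by (simp only:) simp
    finally show "(\<Sum>z\<in>Z. (u z * (z - z0)) * z ^ n) = 0" .
  qed
  from insert(3)[OF this] have "\<forall>z\<in>Z. u z = 0" using insert(2) by auto
  moreover have "u z0 = 0" using insert(4)[rule_format, of 0] insert(1,2) \<open>\<forall>z\<in>Z. u z = 0\<close> by simp
  ultimately show ?case by simp
qed

lemma unique_product_is_root:
  assumes f1: "power_sum_repr f1 S1 c1" and g: "power_sum_repr g T d"
    and f2: "power_sum_repr f2 S2 c2" and prod: "\<forall>n. f2 n = f1 n * g n"
    and ab: "a \<in> S1" "b \<in> T" and unique: "\<forall>a'\<in>S1. \<forall>b'\<in>T. a' * b' = a * b \<longrightarrow> a' = a \<and> b' = b"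
  shows "a * b \<in> S2"
proof -
  let ?P = "S1 \<times> T"
  let ?pr = "\<lambda>p::complex \<times> complex. fst p * snd p"
  let ?w = "\<lambda>p::complex \<times> complex. c1 (fst p) * d (snd p)"
  define U where "U z = (\<Sum>p\<in>{p\<in>?P. ?pr p = z}. ?w p)" for z
  define V where "V z = (if z \<in> S2 then c2 z else 0)" for z
  define Z where "Z = ?pr ` ?P \<union> S2"
  have finP: "finite ?P" and finZ: "finite Z"
    using f1 g f2 unfolding power_sum_repr_def Z_def by auto
  have "\<forall>n. (\<Sum>z\<in>Z. (V z - U z) * z ^ n) = 0"
  proof
    fix n
    have "f1 n * g n = (\<Sum>p\<in>?P. ?w p * ?pr p ^ n)"
      using f1 g unfolding power_sum_repr_def
      by (simp add: sum_product sum.cartesian_product power_mult_distrib algebra_simps case_prod_beta)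
    also have "\<dots> = (\<Sum>z\<in>?pr ` ?P. (\<Sum>p\<in>{p\<in>?P. ?pr p = z}. ?w p * ?pr p ^ n))"
      by (rule sum.image_gen[OF finP])
    also have "\<dots> = (\<Sum>z\<in>?pr ` ?P. U z * z ^ n)"
      unfolding U_def sum_distrib_right by (intro sum.cong refl) auto
    also have "\<dots> = (\<Sum>z\<in>Z. U z * z ^ n)"
    proof (rule sum.mono_neutral_left[OF finZ])
      show "?pr ` ?P \<subseteq> Z" unfolding Z_def by blast
      show "\<forall>z\<in>Z - ?pr ` ?P. U z * z ^ n = 0"
      proof
        fix z assume "z \<in> Z - ?pr ` ?P"
        then have "{p\<in>?P. ?pr p = z} = {}" by force
        then show "U z * z ^ n = 0" unfolding U_def by (metis sum.empty mult_zero_left)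
      qed
    qed
    finally have U: "f1 n * g n = (\<Sum>z\<in>Z. U z * z ^ n)" .
    have "f2 n = (\<Sum>z\<in>S2. V z * z ^ n)" using f2 unfolding power_sum_repr_def V_def by simp
    also have "\<dots> = (\<Sum>z\<in>Z. V z * z ^ n)"
      by (rule sum.mono_neutral_left[OF finZ]) (auto simp: Z_def V_def)
    finally have "f2 n = (\<Sum>z\<in>Z. V z * z ^ n)" .
    then show "(\<Sum>z\<in>Z. (V z - U z) * z ^ n) = 0"
      using prod U by (simp add: algebra_simps sum_subtractf)
  qed
  from power_sum_zero_imp_coeffs_zero[OF finZ this] have VU: "\<forall>z\<in>Z. V z = U z" by simp
  have "{p\<in>?P. ?pr p = a * b} = {(a, b)}" using unique ab by auto
  then have "U (a * b) \<noteq> 0" using f1 g ab unfolding U_def power_sum_repr_def by simp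
  moreover have "a * b \<in> Z" unfolding Z_def using ab by force
  ultimately have "V (a * b) \<noteq> 0" using VU by simp
  then show ?thesis unfolding V_def by presburger
qed

fun lex_top :: "(complex \<Rightarrow> real) list \<Rightarrow> complex set \<Rightarrow> complex set" where
  "lex_top [] X = X"
| "lex_top (h # hs) X = lex_top hs {x\<in>X. h x = Max (h ` X)}"

lemma lex_top_subset: "lex_top hs X \<subseteq> X"
  by (induction hs arbitrary: X) auto

lemma lex_top_nonempty: "finite X \<Longrightarrow> X \<noteq> {} \<Longrightarrow> lex_top hs X \<noteq> {}"
proof (induction hs arbitrary: X)
  case Nil
  then show ?case by simp
next
  case (Cons h hs)
  have "Max (h ` X) \<in> h ` X" using Cons.prems by (intro Max_in) auto
  then have "{x\<in>X. h x = Max (h ` X)} \<noteq> {}" by force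
  then show ?case using Cons by simp
qed

lemma lex_top_max:
  assumes "x \<in> lex_top (h # hs) X" "y \<in> X" "finite X"
  shows "h y \<le> h x"
proof -
  have "x \<in> {x\<in>X. h x = Max (h ` X)}" using assms(1) lex_top_subset by auto
  then show ?thesis using assms(2,3) by auto
qed

lemma lex_top_singleton:
  assumes "separates_points hs X" "x \<in> lex_top hs X" "y \<in> lex_top hs X"
  shows "x = y"
proof -
  have "h x = h y" if "h \<in> set hs" for h
    using assms(2,3) that
  proof (induction hs arbitrary: X)
    case (Cons g hs)
    have "x \<in> {x\<in>X. g x = Max (g ` X)}" "y \<in> {x\<in>X. g x = Max (g ` X)}"
      using Cons.prems(1,2) lex_top_subset[of hs "{x\<in>X. g x = Max (g ` X)}"] by auto
    then show ?case using Cons by (cases "h = g") auto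
  qed simp
  then show ?thesis using assms lex_top_subset unfolding separates_points_def by blast
qed

text \<open>A character is additive, so the lexicographic top of a product set is reached only by
  products of lexicographic tops.\<close>

lemma lex_top_product:
  assumes "\<forall>h\<in>set hs. hom_on G h" "X \<subseteq> G" "Y \<subseteq> G" "finite X" "finite Y"
    "a \<in> X" "b \<in> Y" "a' \<in> lex_top hs X" "b' \<in> lex_top hs Y" "a * b = a' * b'"
  shows "a \<in> lex_top hs X \<and> b \<in> lex_top hs Y"
  using assms
proof (induction hs arbitrary: X Y)
  case Nil
  then show ?case by simp
next
  case (Cons h hs)
  let ?X = "{x\<in>X. h x = Max (h ` X)}" and ?Y = "{y\<in>Y. h y = Max (h ` Y)}"
  have a'b': "a' \<in> ?X" "b' \<in> ?Y" using Cons.prems(8,9) lex_top_subset by auto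
  have "hom_on G h" using Cons.prems(1) by simp
  moreover have "a \<in> G" "b \<in> G" "a' \<in> G" "b' \<in> G" using Cons.prems(2,3,6,7) a'b' by auto
  ultimately have "h (a * b) = h a + h b" "h (a' * b') = h a' + h b'" unfolding hom_on_def by blast+
  then have "h a + h b = h a' + h b'" using Cons.prems(10) by simp
  moreover have "h a \<le> Max (h ` X)" "h b \<le> Max (h ` Y)" using Cons.prems(4-7) by auto
  ultimately have "a \<in> ?X" "b \<in> ?Y" using a'b' Cons.prems(6,7) by auto
  then show ?case using Cons.IH[of ?X ?Y] Cons.prems a'b' by auto
qed

lemma leading_root:
  assumes f1: "power_sum_repr f1 S1 c1" and g: "power_sum_repr g T d"
    and f2: "power_sum_repr f2 S2 c2" and prod: "\<forall>n. f2 n = f1 n * g n"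
    and homs: "\<forall>h\<in>set (h0 # hs). hom_on G h" and "S1 \<subseteq> G" "T \<subseteq> G"
    and sep: "separates_points hs S1" "separates_points hs T"
  shows "\<exists>a\<in>S1. \<exists>b\<in>T. a * b \<in> S2 \<and> (\<forall>a'\<in>S1. h0 a' \<le> h0 a) \<and> (\<forall>b'\<in>T. h0 b' \<le> h0 b)"
proof -
  let ?hs = "h0 # hs"
  have fin: "finite S1" "finite T" and ne: "S1 \<noteq> {}" "T \<noteq> {}"
    using f1 g unfolding power_sum_repr_def by auto
  obtain a b where a: "a \<in> lex_top ?hs S1" and b: "b \<in> lex_top ?hs T"
    using lex_top_nonempty[OF fin(1) ne(1), of ?hs] lex_top_nonempty[OF fin(2) ne(2), of ?hs] by blast
  have sep': "separates_points ?hs S1" "separates_points ?hs T"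
    using sep unfolding separates_points_def by auto
  have "a' = a \<and> b' = b" if "a' \<in> S1" "b' \<in> T" "a' * b' = a * b" for a' b'
    using lex_top_product[OF homs \<open>S1 \<subseteq> G\<close> \<open>T \<subseteq> G\<close> fin that(1,2) a b that(3)]
      lex_top_singleton[OF sep'(1) _ a] lex_top_singleton[OF sep'(2) _ b] by blast
  moreover have "a \<in> S1" "b \<in> T" using a b lex_top_subset by blast+
  ultimately have "a * b \<in> S2" using unique_product_is_root[OF f1 g f2 prod] by blast
  then show ?thesis using \<open>a \<in> S1\<close> \<open>b \<in> T\<close> lex_top_max[OF a _ fin(1)] lex_top_max[OF b _ fin(2)] by blast
qed

theorem lemma5p10:
  fixes f1 f2 g :: "nat \<Rightarrow> complex"
    and S1 S2 T :: "complex set"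
    and c1 c2 d :: "complex \<Rightarrow> complex"
  assumes "power_sum_repr f1 S1 c1"
    and "power_sum_repr f2 S2 c2"
    and "power_sum_repr g T d"
    and "torsion_free (gen_group (S1 \<union> S2 \<union> T))"
    and "1 \<in> S1"
    and "\<forall>n. f2 n = f1 n * g n"
  shows "\<forall>\<gamma>\<in>S1. \<exists>k::nat. k > 0 \<and> \<gamma> ^ k \<in> gen_group S2"
proof (rule ballI, rule ccontr)
  fix \<gamma> assume \<gamma>: "\<gamma> \<in> S1" and "\<not> (\<exists>k>0. \<gamma> ^ k \<in> gen_group S2)"
  then have no_power: "\<forall>k>0. \<gamma> ^ k \<notin> gen_group S2" by blast
  define G where "G = gen_group (S1 \<union> S2 \<union> T)"
  have A: "finite (S1 \<union> S2 \<union> T)" "0 \<notin> S1 \<union> S2 \<union> T"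
    using assms(1-3) unfolding power_sum_repr_def by auto
  have sub: "S1 \<subseteq> G" "S2 \<subseteq> G" "T \<subseteq> G" unfolding G_def by (auto intro: gen_group.gen)
  obtain \<phi> where \<phi>: "hom_on G \<phi>" "\<forall>b\<in>S2. \<phi> b = 0" "\<phi> \<gamma> = 1"
    using exists_hom_on_vanishing[OF A sub(2)[unfolded G_def] sub(1)[THEN subsetD, OF \<gamma>, unfolded G_def] no_power]
    unfolding G_def by blast
  have "finite (S1 \<union> T)" "S1 \<union> T \<subseteq> G" using A(1) sub by auto
  then obtain hs where hs: "\<forall>h\<in>set hs. hom_on G h" "separates_points hs (S1 \<union> T)"
    using torsion_free_separating_homs[OF A assms(4)] unfolding G_def by blast
  have sep: "separates_points hs S1" "separates_points hs T"
    using separates_points_subset[OF hs(2)] by auto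
  have homs: "\<forall>h\<in>set (\<phi> # hs). hom_on G h" "\<forall>h\<in>set ((\<lambda>x. - \<phi> x) # hs). hom_on G h"
    using \<phi>(1) hom_on_uminus[OF \<phi>(1)] hs(1) by auto
  obtain a1 b1 where ab1: "a1 \<in> S1" "b1 \<in> T" "a1 * b1 \<in> S2"
    "\<forall>a\<in>S1. \<phi> a \<le> \<phi> a1" "\<forall>b\<in>T. \<phi> b \<le> \<phi> b1"
    using leading_root[OF assms(1,3,2,6) homs(1) sub(1,3) sep] by blast
  obtain a2 b2 where ab2: "a2 \<in> S1" "b2 \<in> T" "a2 * b2 \<in> S2"
    "\<forall>a\<in>S1. - \<phi> a \<le> - \<phi> a2" "\<forall>b\<in>T. - \<phi> b \<le> - \<phi> b2"
    using leading_root[OF assms(1,3,2,6) homs(2) sub(1,3) sep] by blast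
  have root_sum: "\<phi> a + \<phi> b = 0" if "a \<in> S1" "b \<in> T" "a * b \<in> S2" for a b
  proof -
    have "\<phi> (a * b) = \<phi> a + \<phi> b" using \<phi>(1) sub that(1,2) unfolding hom_on_def by blast
    then show ?thesis using \<phi>(2) that(3) by simp
  qed
  have "\<phi> 1 = 0" using hom_on_one \<phi>(1) unfolding G_def by blast
  then have "1 \<le> \<phi> a1" "\<phi> a2 \<le> 0" "\<phi> b2 \<le> \<phi> b1"
    using ab1(4,5) ab2(2,4) \<gamma> \<phi>(3) assms(5) by force+
  then show False using root_sum[OF ab1(1-3)] root_sum[OF ab2(1-3)] by linarith
qed

end
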